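(* Let $E$ be a row-finite graph and let $H_1\subseteq H_2$ be hereditary saturated subsets of $E^0$. Then there is a $\mathbb Z$-monoid isomorphism $M^{\mathrm{gr}}_{H_2/H_1}\cong M^{\mathrm{gr}}_{E_{H_2}}/M^{\mathrm{gr}}_{E_{H_1}}$ (sending $v(i)$, $v\in H_2\setminus H_1$, to the class of $v(i)$). In particular, for a hereditary saturated subset $H$ of $E^0$ and the $\mathbb Z$-order ideal $I$ of $M^{\mathrm{gr}}_E$ generated by $\{v(i):v\in H,i\in\mathbb Z\}$, there is a $\mathbb Z$-monoid isomorphism $M^{\mathrm{gr}}_{E/H}\cong M^{\mathrm{gr}}_E/I$.
   Context: A graph $E=(E^0,E^1,r,s)$ is row-finite if each vertex emits finitely many edges; a sink is a vertex emitting no edges. $H\subseteq E^0$ is hereditary if $s(e)\in H$ implies $r(e)\in H$; it is saturated if every non-sink $v$ with $r(s^{-1}(v))\subseteq H$ lies in $H$. For a row-finite graph $G$, $M^{\mathrm{gr}}_G$ is the commutative monoid generated by symbols $v(i)$ ($v\in G^0$, $i\in\mathbb Z$) subject to $v(i)=\sum_{e\in s^{-1}(v)}r(e)(i-1)$ for every non-sink $v$ and every $i$; $\mathbb Z$ acts by ${}^n v(i)=v(i-n)$. The restriction graph $E_H$ has vertices $H$, edges $\{e:s(e)\in H\}$. For $H_1\subseteq H_2$ hereditary saturated, the graph $H_2/H_1$ has vertices $H_2\setminus H_1$ and edges $\{e\in E^1: s(e)\in H_2,\ r(e)\notin H_1\}$ with restricted $r,s$; $E/H:=E^0/H$ (vertices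 $E^0\setminus H$, edges with $r(e)\notin H$). The natural map $M^{\mathrm{gr}}_{E_{H_1}}\to M^{\mathrm{gr}}_{E_{H_2}}$ ($v(i)\mapsto v(i)$) is used to regard $M^{\mathrm{gr}}_{E_{H_1}}$ as a submonoid of $M^{\mathrm{gr}}_{E_{H_2}}$. For a submonoid $N$ of a commutative monoid $M$, $M/N$ is $M$ modulo the congruence $a\sim b$ iff $a+i=b+j$ for some $i,j\in N$. *)

theory Defs
  imports Main "HOL-Library.Multiset"
begin

record ('v, 'e) graph =
  verts :: "'v set"
  edges :: "'e set"
  src   :: "'e \<Rightarrow> 'v"
  rng   :: "'e \<Rightarrow> 'v"

definition wf_graph :: "('v, 'e) graph \<Rightarrow> bool" where
  "wf_graph G \<longleftrightarrow> (\<forall>e\<in>edges G. src G e \<in> verts G \<and> rng G e \<in> verts G)"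

definition emits :: "('v, 'e) graph \<Rightarrow> 'v \<Rightarrow> 'e set" where
  "emits G v = {e \<in> edges G. src G e = v}"

definition row_finite :: "('v, 'e) graph \<Rightarrow> bool" where
  "row_finite G \<longleftrightarrow> (\<forall>v\<in>verts G. finite (emits G v))"

definition sink :: "('v, 'e) graph \<Rightarrow> 'v \<Rightarrow> bool" where
  "sink G v \<longleftrightarrow> v \<in> verts G \<and> emits G v = {}"

definition hereditary :: "('v, 'e) graph \<Rightarrow> 'v set \<Rightarrow> bool" where
  "hereditary G H \<longleftrightarrow> H \<subseteq> verts G \<and> (\<forall>e\<in>edges G. src G e \<in> H \<longrightarrow> rng G e \<in> H)"

definition saturated :: "('v, 'e) graph \<Rightarrow> 'v set \<Rightarrow> bool" where
  "saturated G H \<longleftrightarrow>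
     (\<forall>v\<in>verts G. \<not> sink G v \<and> rng G ` emits G v \<subseteq> H \<longrightarrow> v \<in> H)"

definition restr_graph :: "('v, 'e) graph \<Rightarrow> 'v set \<Rightarrow> ('v, 'e) graph" where
  "restr_graph G H = \<lparr>verts = H, edges = {e \<in> edges G. src G e \<in> H},
                        src = src G, rng = rng G\<rparr>"

definition quot_graph :: "('v, 'e) graph \<Rightarrow> 'v set \<Rightarrow> 'v set \<Rightarrow> ('v, 'e) graph" where
  "quot_graph G H1 H2 = \<lparr>verts = H2 - H1,
                           edges = {e \<in> edges G. src G e \<in> H2 \<and> rng G e \<notin> H1},
                           src = src G, rng = rng G\<rparr>"

definition graph_mod :: "('v, 'e) graph \<Rightarrow> 'v set \<Rightarrow> ('v, 'e) graph" where
  "graph_mod G H = quot_graph G H (verts G)"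

record 'a zmon =
  zcar  :: "'a set"
  zadd  :: "'a \<Rightarrow> 'a \<Rightarrow> 'a"
  zzero :: "'a"
  zact  :: "int \<Rightarrow> 'a \<Rightarrow> 'a"

definition zmon_iso :: "'a zmon \<Rightarrow> 'b zmon \<Rightarrow> ('a \<Rightarrow> 'b) \<Rightarrow> bool" where
  "zmon_iso M N f \<longleftrightarrow>
     bij_betw f (zcar M) (zcar N) \<and>
     (\<forall>x\<in>zcar M. \<forall>y\<in>zcar M. f (zadd M x y) = zadd N (f x) (f y)) \<and>
     f (zzero M) = zzero N \<and>
     (\<forall>n. \<forall>x\<in>zcar M. f (zact M n x) = zact N n (f x))"

definition zquot_rel :: "'a zmon \<Rightarrow> 'a set \<Rightarrow> ('a \<times> 'a) set" where
  "zquot_rel M N = {(a, b). a \<in> zcar M \<and> b \<in> zcar M \<and>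
                       (\<exists>i\<in>N. \<exists>j\<in>N. zadd M a i = zadd M b j)}"

definition zmon_quot :: "'a zmon \<Rightarrow> 'a set \<Rightarrow> 'a set zmon" where
  "zmon_quot M N =
     \<lparr>zcar = zcar M // zquot_rel M N,
      zadd = (\<lambda>A B. zquot_rel M N `` {zadd M a b | a b. a \<in> A \<and> b \<in> B}),
      zzero = zquot_rel M N `` {zzero M},
      zact = (\<lambda>n A. zquot_rel M N `` (zact M n ` A))\<rparr>"

definition zorder_ideal :: "'a zmon \<Rightarrow> 'a set \<Rightarrow> bool" where
  "zorder_ideal M I \<longleftrightarrow>
     I \<subseteq> zcar M \<and> zzero M \<in> I \<and>
     (\<forall>x\<in>I. \<forall>y\<in>I. zadd M x y \<in> I) \<and>
     (\<forall>x\<in>zcar M. \<forall>y\<in>I. (\<exists>c\<in>zcar M. zadd M x c = y) \<longrightarrow> x \<in> I) \<and>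
     (\<forall>n. \<forall>x\<in>I. zact M n x \<in> I)"

definition zorder_ideal_gen :: "'a zmon \<Rightarrow> 'a set \<Rightarrow> 'a set" where
  "zorder_ideal_gen M S = \<Inter>{I. zorder_ideal M I \<and> S \<subseteq> I}"

text \<open>Elements of the free commutative monoid on the symbols \<open>v(i)\<close> are
  multisets over \<open>G^0 \<times> \<int>\<close>; the pair \<open>(v,i)\<close> stands for \<open>v(i)\<close>.\<close>
definition msets_over :: "'a set \<Rightarrow> 'a multiset set" where
  "msets_over A = {m. set_mset m \<subseteq> A}"

inductive_set gr_cong :: "('v, 'e) graph \<Rightarrow> (('v \<times> int) multiset \<times> ('v \<times> int) multiset) set"
  for G :: "('v, 'e) graph" where
  gr_refl:  "a \<in> msets_over (verts G \<times> UNIV) \<Longrightarrow> (a, a) \<in> gr_cong G"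
| gr_base:  "v \<in> verts G \<Longrightarrow> \<not> sink G v \<Longrightarrow>
             ({#(v, i)#}, \<Sum>e\<in>emits G v. {#(rng G e, i - 1)#}) \<in> gr_cong G"
| gr_sym:   "(a, b) \<in> gr_cong G \<Longrightarrow> (b, a) \<in> gr_cong G"
| gr_trans: "(a, b) \<in> gr_cong G \<Longrightarrow> (b, c) \<in> gr_cong G \<Longrightarrow> (a, c) \<in> gr_cong G"
| gr_add:   "(a, b) \<in> gr_cong G \<Longrightarrow> (c, d) \<in> gr_cong G \<Longrightarrow> (a + c, b + d) \<in> gr_cong G"

definition shift :: "int \<Rightarrow> ('v \<times> int) multiset \<Rightarrow> ('v \<times> int) multiset" where
  "shift n m = image_mset (\<lambda>(v, i). (v, i - n)) m"

definition Mgr :: "('v, 'e) graph \<Rightarrow> ('v \<times> int) multiset set zmon" where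
  "Mgr G =
     \<lparr>zcar = msets_over (verts G \<times> UNIV) // gr_cong G,
      zadd = (\<lambda>X Y. gr_cong G `` {x + y | x y. x \<in> X \<and> y \<in> Y}),
      zzero = gr_cong G `` {{#}},
      zact = (\<lambda>n X. gr_cong G `` (shift n ` X))\<rparr>"

definition gen :: "('v, 'e) graph \<Rightarrow> 'v \<Rightarrow> int \<Rightarrow> ('v \<times> int) multiset set" where
  "gen G v i = gr_cong G `` {{#(v, i)#}}"

definition nat_map :: "('v, 'e) graph \<Rightarrow> 'v set \<Rightarrow>
                        ('v \<times> int) multiset set \<Rightarrow> ('v \<times> int) multiset set" where
  "nat_map G H2 X = gr_cong (restr_graph G H2) `` X"

end

theory Submission
  imports Defs
begin

(* Deleting the vertices of K, i.e. sending v(i) to 0 for v in K, induces a surjective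
   Z-monoid homomorphism pi = graph_mod_proj G K from M^gr_G onto M^gr_{G/K}: a defining
   relation at a vertex of K becomes 0 = 0 because K is hereditary, and one at a vertex
   outside K becomes the defining relation of G/K because K is saturated. Conversely, every
   relation of G/K holds in G once suitable elements supported on K are added to both sides.
   Hence, for every submonoid N that contains the classes supported on K and lies in the
   kernel of pi, the congruence defined by N is the kernel congruence of pi, and the fibres
   of pi identify M^gr_{G/K} with M^gr_G/N. The image of M^gr_{E_H1} in M^gr_{E_H2}
   (G = E_H2, K = H1) and the order ideal generated by H (G = E, K = H) are both such N;
   the kernel of pi is an order ideal because M^gr_{G/K} is conical. *)

section \<open>Quotients by kernel congruences\<close>

lemma trans_Image_eq_class:
  assumes "trans r" "x \<in> S" "S \<subseteq> r `` {x}"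
  shows "r `` S = r `` {x}"
  using assms by (blast dest: transD)

lemma zquot_rel_Image_fibre:
  assumes ker: "\<And>x y. x \<in> zcar M \<Longrightarrow> y \<in> zcar M \<Longrightarrow> (x, y) \<in> zquot_rel M N \<longleftrightarrow> p x = p y"
    and "S \<subseteq> {x \<in> zcar M. p x = y}" "S \<noteq> {}"
  shows "zquot_rel M N `` S = {x \<in> zcar M. p x = y}"
proof -
  have rel: "(x, z) \<in> zquot_rel M N \<longleftrightarrow> x \<in> zcar M \<and> z \<in> zcar M \<and> p x = p z" for x z
    using ker[of x z] by (auto simp: zquot_rel_def)
  obtain x0 where x0: "x0 \<in> S" using assms(3) by blast
  show ?thesis
  proof (intro set_eqI iffI)
    fix z assume "z \<in> zquot_rel M N `` S"
    then obtain x where "x \<in> S" "(x, z) \<in> zquot_rel M N" by blast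
    then show "z \<in> {x \<in> zcar M. p x = y}" using assms(2) by (auto simp: rel)
  next
    fix z assume "z \<in> {x \<in> zcar M. p x = y}"
    then have "(x0, z) \<in> zquot_rel M N" using x0 assms(2) by (auto simp: rel)
    then show "z \<in> zquot_rel M N `` S" using x0 by blast
  qed
qed

lemma zcar_zmon_quot_kernel:
  assumes surj: "p ` zcar M = zcar Q"
    and ker: "\<And>x y. x \<in> zcar M \<Longrightarrow> y \<in> zcar M \<Longrightarrow> (x, y) \<in> zquot_rel M N \<longleftrightarrow> p x = p y"
  shows "zcar (zmon_quot M N) = (\<lambda>y. {x \<in> zcar M. p x = y}) ` zcar Q"
proof -
  have "zcar (zmon_quot M N) = (\<lambda>x. zquot_rel M N `` {x}) ` zcar M"
    by (auto simp: zmon_quot_def quotient_def)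
  also have "\<dots> = (\<lambda>y. {x \<in> zcar M. p x = y}) ` p ` zcar M"
    unfolding image_image by (rule image_cong[OF refl], rule zquot_rel_Image_fibre[OF ker]) auto
  finally show ?thesis using surj by simp
qed

lemma zmon_iso_quot_kernel:
  assumes surj: "p ` zcar M = zcar Q"
    and add: "\<And>x y. x \<in> zcar M \<Longrightarrow> y \<in> zcar M \<Longrightarrow>
                zadd M x y \<in> zcar M \<and> p (zadd M x y) = zadd Q (p x) (p y)"
    and zero: "zzero M \<in> zcar M" "p (zzero M) = zzero Q"
    and act: "\<And>n x. x \<in> zcar M \<Longrightarrow> zact M n x \<in> zcar M \<and> p (zact M n x) = zact Q n (p x)"
    and ker: "\<And>x y. x \<in> zcar M \<Longrightarrow> y \<in> zcar M \<Longrightarrow> (x, y) \<in> zquot_rel M N \<longleftrightarrow> p x = p y"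
  shows "zmon_iso Q (zmon_quot M N) (\<lambda>y. {x \<in> zcar M. p x = y})"
proof -
  let ?R = "zquot_rel M N" and ?f = "\<lambda>y. {x \<in> zcar M. p x = y}"
  note fibre = zquot_rel_Image_fibre[OF ker]
  have fibre_nonempty: "?f y \<noteq> {}" if "y \<in> zcar Q" for y
  proof -
    from that surj obtain x where "x \<in> zcar M" "y = p x" by blast
    then show ?thesis by blast
  qed
  have "inj_on ?f (zcar Q)"
  proof (rule inj_onI)
    fix y y' assume "y \<in> zcar Q" "?f y = ?f y'"
    then obtain x where "x \<in> ?f y" "x \<in> ?f y'" using fibre_nonempty by blast
    then show "y = y'" by simp
  qed
  moreover have "zadd (zmon_quot M N) (?f y) (?f y') = ?f (zadd Q y y')"
    if "y \<in> zcar Q" "y' \<in> zcar Q" for y y'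
  proof -
    from that fibre_nonempty obtain x x' where "x \<in> ?f y" "x' \<in> ?f y'" by blast
    then have "{zadd M x x' |x x'. x \<in> ?f y \<and> x' \<in> ?f y'} \<noteq> {}" by blast
    moreover have "{zadd M x x' |x x'. x \<in> ?f y \<and> x' \<in> ?f y'} \<subseteq> ?f (zadd Q y y')"
      using add by auto
    ultimately have "?R `` {zadd M x x' |x x'. x \<in> ?f y \<and> x' \<in> ?f y'} = ?f (zadd Q y y')"
      by (intro fibre)
    then show ?thesis by (simp add: zmon_quot_def)
  qed
  moreover have "zzero (zmon_quot M N) = ?f (zzero Q)"
  proof -
    have "?R `` {zzero M} = ?f (zzero Q)" using zero by (intro fibre) auto
    then show ?thesis by (simp add: zmon_quot_def)
  qed
  moreover have "zact (zmon_quot M N) n (?f y) = ?f (zact Q n y)" if "y \<in> zcar Q" for n y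
  proof -
    have "zact M n ` ?f y \<subseteq> ?f (zact Q n y)" using act by auto
    moreover have "zact M n ` ?f y \<noteq> {}" using fibre_nonempty[OF that] by blast
    ultimately have "?R `` (zact M n ` ?f y) = ?f (zact Q n y)" by (intro fibre)
    then show ?thesis by (simp add: zmon_quot_def)
  qed
  moreover note zcar_zmon_quot_kernel[OF surj ker]
  ultimately show ?thesis
    unfolding zmon_iso_def bij_betw_def by (intro conjI ballI allI) simp_all
qed
section \<open>The graph monoid\<close>

abbreviation gr_msets :: "('v, 'e) graph \<Rightarrow> ('v \<times> int) multiset set" where
  "gr_msets G \<equiv> msets_over (verts G \<times> UNIV)"

definition gr_class :: "('v, 'e) graph \<Rightarrow> ('v \<times> int) multiset \<Rightarrow> ('v \<times> int) multiset set" where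
  "gr_class G a = gr_cong G `` {a}"

lemma msets_over_add [simp]: "a + b \<in> msets_over A \<longleftrightarrow> a \<in> msets_over A \<and> b \<in> msets_over A"
  by (auto simp: msets_over_def)

lemma msets_over_empty [simp]: "{#} \<in> msets_over A"
  by (simp add: msets_over_def)

lemma sum_singletons_eq_image_mset: "(\<Sum>e\<in>A. {#f e#}) = image_mset f (mset_set A)"
  by (simp add: sum_unfold_sum_mset)

lemma gr_cong_in_gr_msets:
  assumes "wf_graph G" "(a, b) \<in> gr_cong G"
  shows "a \<in> gr_msets G \<and> b \<in> gr_msets G"
  using assms(2)
proof induction
  case (gr_base v i)
  have "set_mset (\<Sum>e\<in>emits G v. {#(rng G e, i - 1)#}) \<subseteq> (\<lambda>e. (rng G e, i - 1)) ` emits G v"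
    by (cases "finite (emits G v)") (simp_all add: sum_singletons_eq_image_mset)
  also have "\<dots> \<subseteq> verts G \<times> UNIV"
    using assms(1) by (auto simp: wf_graph_def emits_def)
  finally show ?case using gr_base by (auto simp: msets_over_def)
qed auto

lemma equiv_gr_cong: "wf_graph G \<Longrightarrow> equiv (gr_msets G) (gr_cong G)"
  by (rule equivI) (auto simp: refl_on_def sym_def trans_def dest: gr_cong_in_gr_msets
                         intro: gr_refl gr_sym gr_trans)

lemma gr_class_eq_iff:
  assumes "wf_graph G" "a \<in> gr_msets G" "b \<in> gr_msets G"
  shows "gr_class G a = gr_class G b \<longleftrightarrow> (a, b) \<in> gr_cong G"
  unfolding gr_class_def using eq_equiv_class_iff[OF equiv_gr_cong[OF assms(1)] assms(2,3)] by simp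

lemma gr_class_self: "a \<in> gr_msets G \<Longrightarrow> a \<in> gr_class G a"
  by (simp add: gr_class_def gr_refl)

lemma shift_add [simp]: "shift n (a + b) = shift n a + shift n b"
  by (simp add: shift_def)

lemma shift_empty [simp]: "shift n {#} = {#}"
  by (simp add: shift_def)

lemma shift_in_msets_over [simp]: "shift n a \<in> msets_over (A \<times> UNIV) \<longleftrightarrow> a \<in> msets_over (A \<times> UNIV)"
  by (auto simp: shift_def msets_over_def)

lemma gr_cong_shift:
  assumes "(a, b) \<in> gr_cong G"
  shows "(shift n a, shift n b) \<in> gr_cong G"
  using assms
proof induction
  case (gr_base v i)
  have "shift n (\<Sum>e\<in>emits G v. {#(rng G e, i - 1)#}) = (\<Sum>e\<in>emits G v. {#(rng G e, i - n - 1)#})"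
    by (simp add: sum_singletons_eq_image_mset shift_def image_mset.compositionality comp_def algebra_simps)
  then show ?case using gr_cong.gr_base[OF gr_base, of "i - n"] by (simp add: shift_def)
qed (auto intro: gr_cong.intros)

lemma zcar_Mgr: "zcar (Mgr G) = gr_class G ` gr_msets G"
  by (auto simp: Mgr_def quotient_def gr_class_def)

lemma zzero_Mgr: "zzero (Mgr G) = gr_class G {#}"
  by (simp add: Mgr_def gr_class_def)

lemma gen_eq_gr_class: "gen G v i = gr_class G {#(v, i)#}"
  by (simp add: gen_def gr_class_def)

lemma zadd_Mgr_gr_class:
  assumes "wf_graph G" "a \<in> gr_msets G" "b \<in> gr_msets G"
  shows "zadd (Mgr G) (gr_class G a) (gr_class G b) = gr_class G (a + b)"
proof -
  have "a + b \<in> {x + y |x y. x \<in> gr_class G a \<and> y \<in> gr_class G b}"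
    using assms(2,3) gr_class_self by blast
  moreover have "{x + y |x y. x \<in> gr_class G a \<and> y \<in> gr_class G b} \<subseteq> gr_class G (a + b)"
    by (auto simp: gr_class_def intro: gr_add)
  moreover have "trans (gr_cong G)"
    using equiv_gr_cong[OF assms(1)] by (simp add: equiv_def)
  ultimately show ?thesis
    by (simp add: Mgr_def gr_class_def trans_Image_eq_class)
qed

lemma zact_Mgr_gr_class:
  assumes "wf_graph G" "a \<in> gr_msets G"
  shows "zact (Mgr G) n (gr_class G a) = gr_class G (shift n a)"
proof -
  have "shift n a \<in> shift n ` gr_class G a"
    using assms(2) gr_class_self by blast
  moreover have "shift n ` gr_class G a \<subseteq> gr_class G (shift n a)"
    by (auto simp: gr_class_def intro: gr_cong_shift)
  moreover have "trans (gr_cong G)"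
    using equiv_gr_cong[OF assms(1)] by (simp add: equiv_def)
  ultimately show ?thesis
    by (simp add: Mgr_def gr_class_def trans_Image_eq_class)
qed

lemma gr_cong_conical:
  assumes "row_finite G" "(a, b) \<in> gr_cong G"
  shows "a = {#} \<longleftrightarrow> b = {#}"
  using assms(2)
proof induction
  case (gr_base v i)
  then have "finite (emits G v)" "emits G v \<noteq> {}"
    using assms(1) by (auto simp: row_finite_def sink_def)
  then show ?case by (simp add: sum_singletons_eq_image_mset mset_set_empty_iff)
qed auto

lemma Mgr_conical:
  assumes "wf_graph G" "row_finite G" "X \<in> zcar (Mgr G)" "Y \<in> zcar (Mgr G)"
    and "zadd (Mgr G) X Y = zzero (Mgr G)"
  shows "X = zzero (Mgr G)"
proof -
  obtain a b where ab: "a \<in> gr_msets G" "b \<in> gr_msets G" "X = gr_class G a" "Y = gr_class G b"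
    using assms(3,4) by (auto simp: zcar_Mgr)
  then have "(a + b, {#}) \<in> gr_cong G"
    using assms(5) by (simp add: zadd_Mgr_gr_class zzero_Mgr gr_class_eq_iff assms(1))
  then have "a = {#}" using gr_cong_conical[OF assms(2)] by fastforce
  then show ?thesis using ab by (simp add: zzero_Mgr)
qed

lemma zadd_Mgr_closed:
  "wf_graph G \<Longrightarrow> X \<in> zcar (Mgr G) \<Longrightarrow> Y \<in> zcar (Mgr G) \<Longrightarrow> zadd (Mgr G) X Y \<in> zcar (Mgr G)"
  by (auto simp: zcar_Mgr zadd_Mgr_gr_class)

lemma zact_Mgr_closed: "wf_graph G \<Longrightarrow> X \<in> zcar (Mgr G) \<Longrightarrow> zact (Mgr G) n X \<in> zcar (Mgr G)"
  by (auto simp: zcar_Mgr zact_Mgr_gr_class)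

lemma zzero_Mgr_closed: "zzero (Mgr G) \<in> zcar (Mgr G)"
  by (simp add: zcar_Mgr zzero_Mgr)

lemma zadd_Mgr_zzero: "wf_graph G \<Longrightarrow> X \<in> zcar (Mgr G) \<Longrightarrow> zadd (Mgr G) X (zzero (Mgr G)) = X"
  by (auto simp: zcar_Mgr zzero_Mgr zadd_Mgr_gr_class)

section \<open>Deleting a hereditary saturated set of vertices\<close>

definition remove_verts :: "'v set \<Rightarrow> ('v \<times> int) multiset \<Rightarrow> ('v \<times> int) multiset" where
  "remove_verts K a = filter_mset (\<lambda>p. fst p \<notin> K) a"

lemma remove_verts_add [simp]: "remove_verts K (a + b) = remove_verts K a + remove_verts K b"
  by (simp add: remove_verts_def)

lemma remove_verts_empty [simp]: "remove_verts K {#} = {#}"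
  by (simp add: remove_verts_def)

lemma remove_verts_shift: "remove_verts K (shift n a) = shift n (remove_verts K a)"
  by (simp add: remove_verts_def shift_def filter_mset_image_mset case_prod_beta comp_def)

lemma remove_verts_in_msets_over:
  "a \<in> msets_over (V \<times> UNIV) \<Longrightarrow> remove_verts K a \<in> msets_over ((V - K) \<times> UNIV)"
  by (auto simp: remove_verts_def msets_over_def)

lemma remove_verts_id:
  assumes "a \<in> msets_over ((V - K) \<times> UNIV)"
  shows "remove_verts K a = a"
proof -
  have "filter_mset (\<lambda>p. fst p \<notin> K) a = filter_mset (\<lambda>_. True) a"
    by (rule filter_mset_cong0) (use assms in \<open>auto simp: msets_over_def\<close>)
  then show ?thesis by (simp add: remove_verts_def)
qed

lemma remove_verts_eq_empty: "a \<in> msets_over (K \<times> UNIV) \<Longrightarrow> remove_verts K a = {#}"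
  by (auto simp: remove_verts_def msets_over_def)

lemma remove_verts_split:
  obtains c where "c \<in> msets_over (K \<times> UNIV)" "a = remove_verts K a + c"
proof
  show "filter_mset (\<lambda>p. fst p \<in> K) a \<in> msets_over (K \<times> UNIV)"
    by (auto simp: msets_over_def)
  show "a = remove_verts K a + filter_mset (\<lambda>p. fst p \<in> K) a"
    using multiset_partition[of a "\<lambda>p. fst p \<notin> K"] by (simp add: remove_verts_def)
qed

lemma graph_mod_simps [simp]:
  "verts (graph_mod G K) = verts G - K" "src (graph_mod G K) = src G" "rng (graph_mod G K) = rng G"
  by (simp_all add: graph_mod_def quot_graph_def)

lemma emits_graph_mod: "wf_graph G \<Longrightarrow> emits (graph_mod G K) v = {e \<in> emits G v. rng G e \<notin> K}"
  by (auto simp: emits_def graph_mod_def quot_graph_def wf_graph_def)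

definition gr_cong_upto :: "('v, 'e) graph \<Rightarrow> 'v set \<Rightarrow> (('v \<times> int) multiset \<times> ('v \<times> int) multiset) set" where
  "gr_cong_upto G K = {(a, b). \<exists>c\<in>msets_over (K \<times> UNIV). \<exists>d\<in>msets_over (K \<times> UNIV). (a + c, b + d) \<in> gr_cong G}"

lemma gr_cong_uptoI:
  "(a + c, b + d) \<in> gr_cong G \<Longrightarrow> c \<in> msets_over (K \<times> UNIV) \<Longrightarrow> d \<in> msets_over (K \<times> UNIV) \<Longrightarrow>
     (a, b) \<in> gr_cong_upto G K"
  unfolding gr_cong_upto_def by blast

lemma gr_cong_uptoE:
  assumes "(a, b) \<in> gr_cong_upto G K"
  obtains c d where "c \<in> msets_over (K \<times> UNIV)" "d \<in> msets_over (K \<times> UNIV)" "(a + c, b + d) \<in> gr_cong G"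
  using assms unfolding gr_cong_upto_def by blast

lemma gr_cong_upto_sym: "(a, b) \<in> gr_cong_upto G K \<Longrightarrow> (b, a) \<in> gr_cong_upto G K"
  by (elim gr_cong_uptoE) (rule gr_cong_uptoI, rule gr_sym)

lemma gr_cong_upto_add:
  assumes "(a, b) \<in> gr_cong_upto G K" "(a', b') \<in> gr_cong_upto G K"
  shows "(a + a', b + b') \<in> gr_cong_upto G K"
proof -
  obtain c d c' d' where K: "c \<in> msets_over (K \<times> UNIV)" "d \<in> msets_over (K \<times> UNIV)"
      "c' \<in> msets_over (K \<times> UNIV)" "d' \<in> msets_over (K \<times> UNIV)"
    and cong: "(a + c, b + d) \<in> gr_cong G" "(a' + c', b' + d') \<in> gr_cong G"
    using assms by (elim gr_cong_uptoE)
  have "(a + a' + (c + c'), b + b' + (d + d')) \<in> gr_cong G"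
    using gr_add[OF cong] by (simp add: ac_simps)
  then show ?thesis by (rule gr_cong_uptoI) (simp_all add: K)
qed

lemma gr_cong_upto_trans:
  assumes "K \<subseteq> verts G" "(a, b) \<in> gr_cong_upto G K" "(b, e) \<in> gr_cong_upto G K"
  shows "(a, e) \<in> gr_cong_upto G K"
proof -
  obtain c d c' d' where K: "c \<in> msets_over (K \<times> UNIV)" "d \<in> msets_over (K \<times> UNIV)"
      "c' \<in> msets_over (K \<times> UNIV)" "d' \<in> msets_over (K \<times> UNIV)"
    and cong: "(a + c, b + d) \<in> gr_cong G" "(b + c', e + d') \<in> gr_cong G"
    using assms(2,3) by (elim gr_cong_uptoE)
  have "c' \<in> gr_msets G" "d \<in> gr_msets G"
    using K(2,3) assms(1) by (auto simp: msets_over_def)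
  then have "(a + (c + c'), b + c' + d) \<in> gr_cong G" "(b + c' + d, e + (d' + d)) \<in> gr_cong G"
    using gr_add[OF cong(1) gr_refl[of c']] gr_add[OF cong(2) gr_refl[of d]]
    by (simp_all add: ac_simps)
  then have "(a + (c + c'), e + (d' + d)) \<in> gr_cong G"
    by (rule gr_trans)
  then show ?thesis by (rule gr_cong_uptoI) (simp_all add: K)
qed

definition graph_mod_proj ::
    "('v, 'e) graph \<Rightarrow> 'v set \<Rightarrow> ('v \<times> int) multiset set \<Rightarrow> ('v \<times> int) multiset set" where
  "graph_mod_proj G K X = gr_cong (graph_mod G K) `` (remove_verts K ` X)"

definition graph_mod_kernel :: "('v, 'e) graph \<Rightarrow> 'v set \<Rightarrow> ('v \<times> int) multiset set set" where
  "graph_mod_kernel G K =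
     {X \<in> zcar (Mgr G). graph_mod_proj G K X = zzero (Mgr (graph_mod G K))}"

locale hereditary_saturated =
  fixes G :: "('v, 'e) graph" and K :: "'v set"
  assumes wf: "wf_graph G" and row_fin: "row_finite G"
    and hered: "hereditary G K" and sat: "saturated G K"
begin

lemma K_subset: "K \<subseteq> verts G"
  using hered by (simp add: hereditary_def)

lemma K_msets_in_gr_msets: "a \<in> msets_over (K \<times> UNIV) \<Longrightarrow> a \<in> gr_msets G"
  using K_subset by (auto simp: msets_over_def)

lemma wf_graph_mod: "wf_graph (graph_mod G K)"
  using wf hered by (auto simp: wf_graph_def hereditary_def graph_mod_def quot_graph_def)

lemma row_finite_graph_mod: "row_finite (graph_mod G K)"
  using row_fin by (auto simp: row_finite_def emits_graph_mod[OF wf])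

lemma remove_verts_out_edges:
  assumes "v \<in> verts G"
  shows "remove_verts K (\<Sum>e\<in>emits G v. {#(rng G e, i)#}) = (\<Sum>e\<in>emits (graph_mod G K) v. {#(rng G e, i)#})"
proof -
  have "finite (emits G v)" using row_fin assms by (simp add: row_finite_def)
  then show ?thesis
    by (simp add: remove_verts_def sum_singletons_eq_image_mset filter_mset_image_mset
                  emits_graph_mod[OF wf])
qed

lemma gr_cong_remove_verts:
  "(a, b) \<in> gr_cong G \<Longrightarrow> (remove_verts K a, remove_verts K b) \<in> gr_cong (graph_mod G K)"
proof (induction rule: gr_cong.induct)
  case (gr_refl a)
  then show ?case by (simp add: remove_verts_in_msets_over gr_cong.gr_refl)
next
  case (gr_base v i)
  show ?case
  proof (cases "v \<in> K")
    case True
    then have "emits (graph_mod G K) v = {}"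
      unfolding emits_graph_mod[OF wf] using hered by (auto simp: emits_def hereditary_def)
    moreover have "remove_verts K {#(v, i)#} = {#}"
      using True by (simp add: remove_verts_def)
    ultimately show ?thesis
      using gr_base by (simp add: remove_verts_out_edges gr_cong.gr_refl)
  next
    case False
    then have "\<not> sink (graph_mod G K) v"
      using sat gr_base by (auto simp: saturated_def sink_def emits_graph_mod[OF wf])
    moreover have "remove_verts K {#(v, i)#} = {#(v, i)#}"
      using False by (simp add: remove_verts_def)
    ultimately show ?thesis
      using False gr_base gr_cong.gr_base[of v "graph_mod G K" i]
      by (simp add: remove_verts_out_edges)
  qed
qed (auto intro: gr_cong.intros)

lemma gr_cong_graph_mod_imp_upto:
  "(a, b) \<in> gr_cong (graph_mod G K) \<Longrightarrow> (a, b) \<in> gr_cong_upto G K"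
proof (induction rule: gr_cong.induct)
  case (gr_refl a)
  then have "a \<in> gr_msets G" by (auto simp: msets_over_def)
  then have "(a + {#}, a + {#}) \<in> gr_cong G" by (simp add: gr_cong.gr_refl)
  then show ?case by (rule gr_cong_uptoI) simp_all
next
  case (gr_base v i)
  let ?out = "\<Sum>e\<in>emits G v. {#(rng G e, i - 1)#}"
  obtain c where c: "c \<in> msets_over (K \<times> UNIV)" "?out = remove_verts K ?out + c"
    by (rule remove_verts_split)
  have v: "v \<in> verts G" "\<not> sink G v"
    using gr_base by (auto simp: sink_def emits_graph_mod[OF wf])
  have "?out = (\<Sum>e\<in>emits (graph_mod G K) v. {#(rng G e, i - 1)#}) + c"
    using c(2) unfolding remove_verts_out_edges[OF v(1)] .
  with gr_cong.gr_base[OF v, of i]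
  have "({#(v, i)#} + {#}, (\<Sum>e\<in>emits (graph_mod G K) v. {#(rng G e, i - 1)#}) + c) \<in> gr_cong G"
    by simp
  then have "({#(v, i)#}, \<Sum>e\<in>emits (graph_mod G K) v. {#(rng G e, i - 1)#}) \<in> gr_cong_upto G K"
    by (rule gr_cong_uptoI) (simp_all add: c(1))
  then show ?case by simp
qed (auto intro: gr_cong_upto_sym gr_cong_upto_add gr_cong_upto_trans[OF K_subset])

lemma remove_verts_gr_cong_upto:
  assumes "a \<in> gr_msets G"
  shows "(a, remove_verts K a) \<in> gr_cong_upto G K"
proof -
  obtain c where c: "c \<in> msets_over (K \<times> UNIV)" "a = remove_verts K a + c"
    by (rule remove_verts_split)
  from gr_refl[OF assms] have "(a + {#}, remove_verts K a + c) \<in> gr_cong G"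
    by (simp only: add_0_right flip: c(2))
  then show ?thesis by (rule gr_cong_uptoI) (simp_all add: c(1))
qed

lemma gr_cong_remove_verts_lift:
  assumes "a \<in> gr_msets G" "b \<in> gr_msets G"
    and "(remove_verts K a, remove_verts K b) \<in> gr_cong (graph_mod G K)"
  shows "(a, b) \<in> gr_cong_upto G K"
  using remove_verts_gr_cong_upto[OF assms(1)] gr_cong_graph_mod_imp_upto[OF assms(3)]
    gr_cong_upto_sym[OF remove_verts_gr_cong_upto[OF assms(2)]]
  by (blast intro: gr_cong_upto_trans[OF K_subset])

lemma graph_mod_proj_gr_class:
  assumes "a \<in> gr_msets G"
  shows "graph_mod_proj G K (gr_class G a) = gr_class (graph_mod G K) (remove_verts K a)"
proof -
  have "remove_verts K a \<in> remove_verts K ` gr_class G a"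
    using assms gr_class_self by blast
  moreover have "remove_verts K ` gr_class G a \<subseteq> gr_class (graph_mod G K) (remove_verts K a)"
    by (auto simp: gr_class_def intro: gr_cong_remove_verts)
  moreover have "trans (gr_cong (graph_mod G K))"
    using equiv_gr_cong[OF wf_graph_mod] by (simp add: equiv_def)
  ultimately show ?thesis
    by (simp add: graph_mod_proj_def gr_class_def trans_Image_eq_class)
qed

lemma graph_mod_proj_surj: "graph_mod_proj G K ` zcar (Mgr G) = zcar (Mgr (graph_mod G K))"
proof -
  have "remove_verts K ` gr_msets G = gr_msets (graph_mod G K)"
  proof
    show "remove_verts K ` gr_msets G \<subseteq> gr_msets (graph_mod G K)"
      by (auto simp: remove_verts_in_msets_over)
    show "gr_msets (graph_mod G K) \<subseteq> remove_verts K ` gr_msets G"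
    proof
      fix b assume "b \<in> gr_msets (graph_mod G K)"
      then have "b = remove_verts K b" "b \<in> gr_msets G"
        by (auto simp: remove_verts_id msets_over_def)
      then show "b \<in> remove_verts K ` gr_msets G" by blast
    qed
  qed
  moreover have "graph_mod_proj G K ` zcar (Mgr G) = gr_class (graph_mod G K) ` remove_verts K ` gr_msets G"
    unfolding zcar_Mgr image_image by (rule image_cong) (simp_all add: graph_mod_proj_gr_class)
  ultimately show ?thesis by (simp add: zcar_Mgr)
qed

lemma graph_mod_proj_zadd:
  assumes "X \<in> zcar (Mgr G)" "Y \<in> zcar (Mgr G)"
  shows "graph_mod_proj G K (zadd (Mgr G) X Y) =
           zadd (Mgr (graph_mod G K)) (graph_mod_proj G K X) (graph_mod_proj G K Y)"
  using assms
  by (auto simp: zcar_Mgr zadd_Mgr_gr_class[OF wf] zadd_Mgr_gr_class[OF wf_graph_mod]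
                 graph_mod_proj_gr_class remove_verts_in_msets_over)

lemma graph_mod_proj_zzero: "graph_mod_proj G K (zzero (Mgr G)) = zzero (Mgr (graph_mod G K))"
  by (simp add: zzero_Mgr graph_mod_proj_gr_class)

lemma graph_mod_proj_zact:
  assumes "X \<in> zcar (Mgr G)"
  shows "graph_mod_proj G K (zact (Mgr G) n X) = zact (Mgr (graph_mod G K)) n (graph_mod_proj G K X)"
  using assms
  by (auto simp: zcar_Mgr zact_Mgr_gr_class[OF wf] zact_Mgr_gr_class[OF wf_graph_mod]
                 graph_mod_proj_gr_class remove_verts_in_msets_over remove_verts_shift)

lemma zquot_rel_iff_graph_mod_proj:
  assumes N: "gr_class G ` msets_over (K \<times> UNIV) \<subseteq> N" "N \<subseteq> graph_mod_kernel G K"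
    and X: "X \<in> zcar (Mgr G)" and Y: "Y \<in> zcar (Mgr G)"
  shows "(X, Y) \<in> zquot_rel (Mgr G) N \<longleftrightarrow> graph_mod_proj G K X = graph_mod_proj G K Y"
proof
  assume "(X, Y) \<in> zquot_rel (Mgr G) N"
  then obtain I J where IJ: "I \<in> N" "J \<in> N" "zadd (Mgr G) X I = zadd (Mgr G) Y J"
    by (auto simp: zquot_rel_def)
  then have "I \<in> graph_mod_kernel G K" "J \<in> graph_mod_kernel G K" using N(2) by blast+
  moreover have "graph_mod_proj G K X \<in> zcar (Mgr (graph_mod G K))"
    "graph_mod_proj G K Y \<in> zcar (Mgr (graph_mod G K))"
    using X Y graph_mod_proj_surj by blast+
  ultimately show "graph_mod_proj G K X = graph_mod_proj G K Y"
    using arg_cong[OF IJ(3), of "graph_mod_proj G K"] X Y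
    by (simp add: graph_mod_kernel_def graph_mod_proj_zadd zadd_Mgr_zzero[OF wf_graph_mod])
next
  assume proj_eq: "graph_mod_proj G K X = graph_mod_proj G K Y"
  obtain a b where ab: "a \<in> gr_msets G" "b \<in> gr_msets G" "X = gr_class G a" "Y = gr_class G b"
    using X Y by (auto simp: zcar_Mgr)
  then have "(remove_verts K a, remove_verts K b) \<in> gr_cong (graph_mod G K)"
    using proj_eq
    by (simp add: graph_mod_proj_gr_class gr_class_eq_iff[OF wf_graph_mod] remove_verts_in_msets_over)
  then have "(a, b) \<in> gr_cong_upto G K"
    by (rule gr_cong_remove_verts_lift[OF ab(1,2)])
  then obtain c d where cd: "c \<in> msets_over (K \<times> UNIV)" "d \<in> msets_over (K \<times> UNIV)"
    "(a + c, b + d) \<in> gr_cong G"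
    by (rule gr_cong_uptoE)
  then have "zadd (Mgr G) X (gr_class G c) = zadd (Mgr G) Y (gr_class G d)"
    using ab by (simp add: zadd_Mgr_gr_class[OF wf] gr_class_eq_iff[OF wf] K_msets_in_gr_msets)
  moreover have "gr_class G c \<in> N" "gr_class G d \<in> N"
    using cd(1,2) N(1) by blast+
  ultimately show "(X, Y) \<in> zquot_rel (Mgr G) N"
    using X Y by (auto simp: zquot_rel_def)
qed

theorem Mgr_graph_mod_iso:
  assumes "gr_class G ` msets_over (K \<times> UNIV) \<subseteq> N" "N \<subseteq> graph_mod_kernel G K"
  shows "\<exists>f. zmon_iso (Mgr (graph_mod G K)) (zmon_quot (Mgr G) N) f \<and>
           (\<forall>v\<in>verts G - K. \<forall>i. f (gen (graph_mod G K) v i) = zquot_rel (Mgr G) N `` {gen G v i})"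
proof (intro exI conjI ballI allI)
  let ?p = "graph_mod_proj G K"
  note ker = zquot_rel_iff_graph_mod_proj[OF assms]
  show "zmon_iso (Mgr (graph_mod G K)) (zmon_quot (Mgr G) N) (\<lambda>y. {x \<in> zcar (Mgr G). ?p x = y})"
    using graph_mod_proj_surj graph_mod_proj_zadd graph_mod_proj_zzero graph_mod_proj_zact
      zadd_Mgr_closed[OF wf] zact_Mgr_closed[OF wf] zzero_Mgr_closed ker
    by (intro zmon_iso_quot_kernel) auto
  fix v i assume v: "v \<in> verts G - K"
  then have "{#(v, i)#} \<in> gr_msets G" "remove_verts K {#(v, i)#} = {#(v, i)#}"
    by (simp_all add: msets_over_def remove_verts_def)
  then have "?p (gen G v i) = gen (graph_mod G K) v i" "gen G v i \<in> zcar (Mgr G)"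
    by (simp_all add: gen_eq_gr_class graph_mod_proj_gr_class zcar_Mgr)
  then have "zquot_rel (Mgr G) N `` {gen G v i} = {x \<in> zcar (Mgr G). ?p x = gen (graph_mod G K) v i}"
    by (intro zquot_rel_Image_fibre[OF ker]) auto
  then show "{x \<in> zcar (Mgr G). ?p x = gen (graph_mod G K) v i} = zquot_rel (Mgr G) N `` {gen G v i}"
    by simp
qed

lemma gr_class_in_graph_mod_kernel:
  "a \<in> msets_over (K \<times> UNIV) \<Longrightarrow> gr_class G a \<in> graph_mod_kernel G K"
  by (simp add: graph_mod_kernel_def zcar_Mgr zzero_Mgr K_msets_in_gr_msets graph_mod_proj_gr_class
                remove_verts_eq_empty)

lemma zorder_ideal_graph_mod_kernel: "zorder_ideal (Mgr G) (graph_mod_kernel G K)"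
  unfolding zorder_ideal_def
proof (intro conjI ballI allI impI)
  show "graph_mod_kernel G K \<subseteq> zcar (Mgr G)"
    by (auto simp: graph_mod_kernel_def)
  show "zzero (Mgr G) \<in> graph_mod_kernel G K"
    by (simp add: graph_mod_kernel_def zzero_Mgr_closed graph_mod_proj_zzero)
next
  fix X Y assume "X \<in> graph_mod_kernel G K" "Y \<in> graph_mod_kernel G K"
  then show "zadd (Mgr G) X Y \<in> graph_mod_kernel G K"
    by (simp add: graph_mod_kernel_def graph_mod_proj_zadd zadd_Mgr_closed[OF wf]
                  zadd_Mgr_zzero[OF wf_graph_mod] zzero_Mgr_closed)
next
  fix X Y assume X: "X \<in> zcar (Mgr G)" and Y: "Y \<in> graph_mod_kernel G K"
    and "\<exists>C\<in>zcar (Mgr G). zadd (Mgr G) X C = Y"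
  then obtain C where C: "C \<in> zcar (Mgr G)" "zadd (Mgr G) X C = Y" by blast
  have "zadd (Mgr (graph_mod G K)) (graph_mod_proj G K X) (graph_mod_proj G K C) =
               zzero (Mgr (graph_mod G K))"
    using Y graph_mod_proj_zadd[OF X C(1)] by (simp add: C(2) graph_mod_kernel_def)
  then have "graph_mod_proj G K X = zzero (Mgr (graph_mod G K))"
    using Mgr_conical[OF wf_graph_mod row_finite_graph_mod] X C(1) graph_mod_proj_surj by blast
  then show "X \<in> graph_mod_kernel G K"
    using X by (simp add: graph_mod_kernel_def)
next
  fix n X assume "X \<in> graph_mod_kernel G K"
  then show "zact (Mgr G) n X \<in> graph_mod_kernel G K"
    by (simp add: graph_mod_kernel_def graph_mod_proj_zact zact_Mgr_closed[OF wf] zzero_Mgr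
                  zact_Mgr_gr_class[OF wf_graph_mod])
qed

lemma gr_class_in_zorder_ideal:
  assumes J: "zorder_ideal (Mgr G) J" "{gen G v i |v i. v \<in> K} \<subseteq> J"
  shows "a \<in> msets_over (K \<times> UNIV) \<Longrightarrow> gr_class G a \<in> J"
proof (induction a)
  case empty
  then show ?case using J(1) by (simp add: zorder_ideal_def zzero_Mgr)
next
  case (add x a)
  then obtain v i where x: "x = (v, i)" "v \<in> K" and a: "a \<in> msets_over (K \<times> UNIV)"
    by (cases x) (auto simp: msets_over_def)
  then have "{#x#} \<in> msets_over (K \<times> UNIV)" by (simp add: msets_over_def)
  then have "gr_class G (add_mset x a) = zadd (Mgr G) (gr_class G {#x#}) (gr_class G a)"
    using a by (simp add: zadd_Mgr_gr_class[OF wf] K_msets_in_gr_msets)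
  moreover have "gr_class G {#x#} \<in> J"
    using J(2) x by (auto simp: gen_eq_gr_class)
  moreover have "gr_class G a \<in> J"
    using add.IH a .
  ultimately show ?case
    using J(1) by (simp add: zorder_ideal_def)
qed

corollary Mgr_graph_mod_iso_zorder_ideal_gen:
  "\<exists>f. zmon_iso (Mgr (graph_mod G K))
          (zmon_quot (Mgr G) (zorder_ideal_gen (Mgr G) {gen G v i |v i. v \<in> K})) f \<and>
       (\<forall>v\<in>verts G - K. \<forall>i. f (gen (graph_mod G K) v i) =
          zquot_rel (Mgr G) (zorder_ideal_gen (Mgr G) {gen G v i |v i. v \<in> K}) `` {gen G v i})"
proof (rule Mgr_graph_mod_iso)
  show "gr_class G ` msets_over (K \<times> UNIV) \<subseteq> zorder_ideal_gen (Mgr G) {gen G v i |v i. v \<in> K}"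
    unfolding zorder_ideal_gen_def using gr_class_in_zorder_ideal by blast
  have "{gen G v i |v i. v \<in> K} \<subseteq> graph_mod_kernel G K"
    using gr_class_in_graph_mod_kernel by (auto simp: gen_eq_gr_class msets_over_def)
  then show "zorder_ideal_gen (Mgr G) {gen G v i |v i. v \<in> K} \<subseteq> graph_mod_kernel G K"
    unfolding zorder_ideal_gen_def using zorder_ideal_graph_mod_kernel by blast
qed

corollary Mgr_graph_mod_iso_classes:
  "\<exists>f. zmon_iso (Mgr (graph_mod G K)) (zmon_quot (Mgr G) (gr_class G ` msets_over (K \<times> UNIV))) f \<and>
       (\<forall>v\<in>verts G - K. \<forall>i. f (gen (graph_mod G K) v i) =
          zquot_rel (Mgr G) (gr_class G ` msets_over (K \<times> UNIV)) `` {gen G v i})"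
  by (rule Mgr_graph_mod_iso) (auto intro: gr_class_in_graph_mod_kernel)

end

section \<open>Restriction graphs\<close>

lemma restr_graph_simps [simp]:
  "verts (restr_graph E H) = H" "src (restr_graph E H) = src E" "rng (restr_graph E H) = rng E"
  by (simp_all add: restr_graph_def)

lemma graph_mod_restr_graph: "graph_mod (restr_graph E H2) H1 = quot_graph E H1 H2"
  by (auto simp: graph_mod_def quot_graph_def restr_graph_def)

lemma emits_restr_graph: "v \<in> H \<Longrightarrow> emits (restr_graph E H) v = emits E v"
  by (auto simp: emits_def restr_graph_def)

lemma hereditary_saturated_restr_graph:
  assumes "wf_graph E" "row_finite E" "hereditary E H1" "saturated E H1" "hereditary E H2"
    and "H1 \<subseteq> H2"
  shows "hereditary_saturated (restr_graph E H2) H1"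
proof
  show "wf_graph (restr_graph E H2)"
    using assms(5) by (auto simp: wf_graph_def restr_graph_def hereditary_def)
  show "row_finite (restr_graph E H2)"
    using assms(2,5) by (auto simp: row_finite_def emits_restr_graph hereditary_def)
  show "hereditary (restr_graph E H2) H1"
    using assms(3,6) by (auto simp: hereditary_def restr_graph_def)
  show "saturated (restr_graph E H2) H1"
    using assms(4,5)
    by (auto simp: saturated_def sink_def emits_restr_graph hereditary_def)
qed

lemma gr_cong_restr_graph_mono:
  assumes "H1 \<subseteq> H2" "(a, b) \<in> gr_cong (restr_graph E H1)"
  shows "(a, b) \<in> gr_cong (restr_graph E H2)"
  using assms(2)
proof induction
  case (gr_refl a)
  then show ?case using assms(1) by (intro gr_cong.gr_refl) (auto simp: msets_over_def)
next
  case (gr_base v i)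
  then have "v \<in> verts (restr_graph E H2)" "\<not> sink (restr_graph E H2) v"
    using assms(1) by (auto simp: sink_def emits_restr_graph)
  from gr_cong.gr_base[OF this, of i] show ?case
    using gr_base assms(1) by (auto simp: emits_restr_graph)
qed (auto intro: gr_cong.intros)

lemma nat_map_image_zcar:
  assumes "H1 \<subseteq> H2"
  shows "nat_map E H2 ` zcar (Mgr (restr_graph E H1)) =
           gr_class (restr_graph E H2) ` msets_over (H1 \<times> UNIV)"
proof -
  have "nat_map E H2 (gr_class (restr_graph E H1) c) = gr_class (restr_graph E H2) c"
    if "c \<in> msets_over (H1 \<times> UNIV)" for c
  proof -
    have "c \<in> gr_class (restr_graph E H1) c"
      using that by (simp add: gr_class_self)
    moreover have "gr_class (restr_graph E H1) c \<subseteq> gr_class (restr_graph E H2) c"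
      by (auto simp: gr_class_def intro: gr_cong_restr_graph_mono[OF assms])
    moreover have "trans (gr_cong (restr_graph E H2))"
      by (auto intro: transI gr_trans)
    ultimately show ?thesis
      by (simp add: nat_map_def gr_class_def trans_Image_eq_class)
  qed
  then show ?thesis
    by (simp add: zcar_Mgr image_image cong: image_cong)
qed

corollary Mgr_quot_graph_iso:
  assumes "wf_graph E" "row_finite E" "hereditary E H1" "saturated E H1" "hereditary E H2"
    and "H1 \<subseteq> H2"
  shows "\<exists>f. zmon_iso (Mgr (quot_graph E H1 H2))
               (zmon_quot (Mgr (restr_graph E H2)) (nat_map E H2 ` zcar (Mgr (restr_graph E H1)))) f \<and>
             (\<forall>v\<in>H2 - H1. \<forall>i. f (gen (quot_graph E H1 H2) v i) =
                zquot_rel (Mgr (restr_graph E H2)) (nat_map E H2 ` zcar (Mgr (restr_graph E H1)))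
                  `` {gen (restr_graph E H2) v i})"
proof -
  interpret hereditary_saturated "restr_graph E H2" H1
    using hereditary_saturated_restr_graph[OF assms] .
  show ?thesis
    using Mgr_graph_mod_iso_classes assms(6) by (simp add: graph_mod_restr_graph nat_map_image_zcar)
qed

theorem lemma3p3:
  fixes E :: "('v, 'e) graph"
  assumes wf: "wf_graph E" and rf: "row_finite E"
  shows
   "(\<forall>H1 H2. hereditary E H1 \<and> saturated E H1 \<and> hereditary E H2 \<and> saturated E H2 \<and> H1 \<subseteq> H2
      \<longrightarrow> (\<exists>f. zmon_iso (Mgr (quot_graph E H1 H2))
                       (zmon_quot (Mgr (restr_graph E H2))
                          (nat_map E H2 ` zcar (Mgr (restr_graph E H1)))) f
              \<and> (\<forall>v\<in>H2 - H1. \<forall>i. f (gen (quot_graph E H1 H2) v i) =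
                     zquot_rel (Mgr (restr_graph E H2))
                        (nat_map E H2 ` zcar (Mgr (restr_graph E H1)))
                       `` {gen (restr_graph E H2) v i}))) \<and>
    (\<forall>H. hereditary E H \<and> saturated E H
      \<longrightarrow> (\<exists>f. zmon_iso (Mgr (graph_mod E H))
                  (zmon_quot (Mgr E) (zorder_ideal_gen (Mgr E) {gen E v i | v i. v \<in> H})) f
              \<and> (\<forall>v\<in>verts E - H. \<forall>i. f (gen (graph_mod E H) v i) =
                     zquot_rel (Mgr E) (zorder_ideal_gen (Mgr E) {gen E v i | v i. v \<in> H})
                       `` {gen E v i})))"
  apply (intro conjI allI impI; elim conjE)
   apply (rule Mgr_quot_graph_iso[OF wf rf]; assumption)
  apply (rule hereditary_saturated.Mgr_graph_mod_iso_zorder_ideal_gen[OF hereditary_saturated.intro[OF wf rf]];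
         assumption)
  done

end
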